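(* (a) For $n\geq 7$ and every integer $i$ with $3\leq i\leq (n-1)/2$, \[|\eta_{(n-i-1,i,1)}|<-\eta_{(n-3,3)}.\] (b) For $n\geq 6$ and all integers $i,j$ with $2\leq j\leq i\leq (n-2)/2$ and $n-i-j\geq i$ (so that $(n-i-j,i,j)$ is a partition), \[|\eta_{(n-i-j,i,j)}|<-\eta_{(n-3,3)}.\]
   Context: $\mathfrak{S}_n$ is the symmetric group and $D_n\subseteq\mathfrak{S}_n$ the set of derangements. For a partition $\lambda\vdash n$, $\chi_\lambda$ is the irreducible character of $\mathfrak{S}_n$ indexed by $\lambda$, $f_\lambda=\chi_\lambda(1)$, and $\eta_\lambda=\frac{1}{f_\lambda}\sum_{w\in D_n}\chi_\lambda(w)$ (the adjacency eigenvalue of the derangement graph on the $\lambda$-isotypic component). *)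

theory Defs
  imports "HOL-Combinatorics.Combinatorics" "HOL-Library.FuncSet" Complex_Main
begin

text \<open>The irreducible character chi_lambda is given by the Frobenius character formula:
  chi_lambda(w) is the coefficient of x^(lambda+delta) in a_delta * p_mu(x_0..x_(l-1)),
  where l = length lambda, delta_i = l-1-i, mu = cycle type of w,
  a_delta = sum over sigma of sign sigma * prod_i x_i^(delta_(sigma i)).
  Expanding p_mu as a product over cycles of w, each monomial corresponds to a map
  f from [n] to [l] constant on the cycles of w (the cycle goes to variable x_(f x)).\<close>

definition frob_char :: "nat list \<Rightarrow> nat \<Rightarrow> (nat \<Rightarrow> nat) \<Rightarrow> int" where
  "frob_char lam n w =
     (let l = length lam in
      \<Sum>\<sigma>\<in>{\<sigma>. \<sigma> permutes {..<l}}.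
        sign \<sigma> * int (card {f \<in> {..<n} \<rightarrow>\<^sub>E {..<l}.
            (\<forall>x<n. f (w x) = f x) \<and>
            (\<forall>i<l. (l - 1 - \<sigma> i) + card {x \<in> {..<n}. f x = i} = lam ! i + (l - 1 - i))}))"

definition is_partition :: "nat list \<Rightarrow> nat \<Rightarrow> bool" where
  "is_partition lam n \<longleftrightarrow> sum_list lam = n \<and> sorted (rev lam) \<and> (\<forall>p\<in>set lam. p > 0)"

definition derangements :: "nat \<Rightarrow> (nat \<Rightarrow> nat) set" where
  "derangements n = {w. w permutes {..<n} \<and> (\<forall>x<n. w x \<noteq> x)}"

definition eta :: "nat list \<Rightarrow> nat \<Rightarrow> real" where
  "eta lam n = (\<Sum>w\<in>derangements n. real_of_int (frob_char lam n w)) / real_of_int (frob_char lam n id)"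

end

theory Submission
  imports Defs
begin

text \<open>Expanding the Frobenius formula, \<open>\<chi>\<^sub>\<lambda>(w)\<close> is a signed count, over permutations \<open>\<sigma>\<close> of the
  rows, of the colourings of \<open>{0..<n}\<close> that are constant on the cycles of \<open>w\<close> and have colour
  classes of sizes \<open>\<lambda>\<^sub>i - i + \<sigma>(i)\<close>. A colouring with class sizes \<open>g\<close> is preserved by
  \<open>\<Prod>\<^sub>i D(g\<^sub>i)\<close> derangements and there are \<open>n! / \<Prod>\<^sub>i g\<^sub>i!\<close> of them, so
  \<open>\<Sum>\<^bsub>w \<in> D\<^sub>n\<^esub> \<chi>\<^sub>\<lambda>(w) = n! det (d(\<lambda>\<^sub>i - i + j))\<close> and \<open>f\<^sub>\<lambda> = n! det (1 / (\<lambda>\<^sub>i - i + j)!)\<close>,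
  where \<open>d(m) = D(m) / m! = \<Sum>\<^bsub>k \<le> m\<^esub> (-1)\<^sup>k / k!\<close> lies in \<open>[1/3, 1/2]\<close> for \<open>m \<ge> 2\<close>.
  For \<open>\<lambda> = (n - 3, 3)\<close> this gives \<open>-\<eta>\<^sub>\<lambda> \<ge> ((n - 2)! / 3 - 3) / (n - 5)\<close>. For three-row
  shapes, column operations bound \<open>|\<eta>\<^sub>\<lambda>|\<close> by a sum of terms \<open>d(x) (x + 2)!\<close> divided by two
  differences of parts; these are at most of order \<open>(n - 4)!\<close> unless the second and third rows
  are very short, and the few remaining families are compared with the two-row bound directly.\<close>

section \<open>Derangements of a finite set\<close>

definition derangements_on :: "'a set \<Rightarrow> ('a \<Rightarrow> 'a) set" where
  "derangements_on S = {p. p permutes S \<and> (\<forall>x\<in>S. p x \<noteq> x)}"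

definition derangement_number :: "nat \<Rightarrow> nat" where
  "derangement_number m = card (derangements_on {..<m})"

lemma derangements_eq_derangements_on: "derangements n = derangements_on {..<n}"
  by (auto simp: derangements_def derangements_on_def)

lemma finite_derangements_on: "finite S \<Longrightarrow> finite (derangements_on S)"
  unfolding derangements_on_def by (rule finite_subset[OF _ finite_permutations]) auto

lemma derangements_on_support: "p \<in> derangements_on S \<Longrightarrow> S = {x. p x \<noteq> x}"
  unfolding derangements_on_def using permutes_not_in by fastforce

lemma card_derangements_on_le:
  assumes h: "bij_betw h A B" and "finite A"
  shows "card (derangements_on A) \<le> card (derangements_on B)"
proof -
  define conj where "conj p = (\<lambda>x. if x \<in> B then h (p (inv_into A h x)) else x)" for p
  have inj_h: "inj_on h A" and inv: "\<And>x. x \<in> B \<Longrightarrow> inv_into A h x \<in> A \<and> h (inv_into A h x) = x"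
    using h by (auto simp: bij_betw_def inv_into_into f_inv_into_f)
  have image: "conj ` derangements_on A \<subseteq> derangements_on B"
  proof safe
    fix p assume "p \<in> derangements_on A"
    then have p: "p permutes A" "\<forall>x\<in>A. p x \<noteq> x" by (auto simp: derangements_on_def)
    have "conj p x \<noteq> x" if "x \<in> B" for x
    proof
      assume "conj p x = x"
      then have "h (p (inv_into A h x)) = h (inv_into A h x)"
        using that inv by (simp add: conj_def)
      then show False
        using p inv[OF that] permutes_in_image[OF p(1)] inj_onD[OF inj_h] by metis
    qed
    then show "conj p \<in> derangements_on B"
      using permutes_bij_inv_into[OF p(1) h] by (simp add: derangements_on_def conj_def)
  qed
  have inj: "inj_on conj (derangements_on A)"
  proof (rule inj_onI, rule ext)
    fix p q y assume p: "p \<in> derangements_on A" and q: "q \<in> derangements_on A" and e: "conj p = conj q"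
    then have pq: "p permutes A" "q permutes A" by (auto simp: derangements_on_def)
    show "p y = q y"
    proof (cases "y \<in> A")
      case True
      then have "h (p y) = h (q y)"
        using fun_cong[OF e, of "h y"] h inj_h by (auto simp: conj_def bij_betw_def)
      then show ?thesis
        using True inj_onD[OF inj_h] permutes_in_image[OF pq(1)] permutes_in_image[OF pq(2)] by blast
    qed (simp add: permutes_not_in[OF pq(1)] permutes_not_in[OF pq(2)])
  qed
  have "finite (derangements_on B)"
    using h \<open>finite A\<close> by (simp add: bij_betw_finite finite_derangements_on)
  then show ?thesis
    by (rule card_inj_on_le[OF inj image])
qed

lemma card_derangements_on:
  assumes "finite A"
  shows "card (derangements_on A) = derangement_number (card A)"
proof -
  obtain h where h: "bij_betw h {..<card A} A"
    using ex_bij_betw_nat_finite[OF assms] by (auto simp: atLeast0LessThan)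
  show ?thesis
    using card_derangements_on_le[OF h] card_derangements_on_le[OF bij_betw_inv_into[OF h] assms]
    by (simp add: derangement_number_def)
qed

lemma permutations_eq_UN_derangements_on:
  "{p. p permutes S} = (\<Union>T\<in>Pow S. derangements_on T)"
proof (intro equalityI subsetI)
  fix p assume "p \<in> {p. p permutes S}"
  then have p: "p permutes S" by simp
  then have "{x. p x \<noteq> x} \<subseteq> S" and "p permutes {x. p x \<noteq> x}"
    using permutes_not_in unfolding permutes_def by fastforce+
  then show "p \<in> (\<Union>T\<in>Pow S. derangements_on T)"
    by (auto simp: derangements_on_def)
qed (auto simp: derangements_on_def intro: permutes_subset)

text \<open>Classify the permutations of \<open>{..<m}\<close> by their support.\<close>
lemma fact_eq_sum_derangement_number:
  "fact m = (\<Sum>k\<le>m. of_nat (m choose k) * real (derangement_number k))"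
proof -
  have "fact m = real (card {p. p permutes {..<m}})"
    by (simp add: card_permutations)
  also have "\<dots> = real (\<Sum>T\<in>Pow {..<m}. card (derangements_on T))"
    unfolding permutations_eq_UN_derangements_on
  proof (subst card_UN_disjoint)
    show "\<forall>T\<in>Pow {..<m}. finite (derangements_on T)"
      by (meson PowD finite_derangements_on finite_lessThan finite_subset)
  qed (auto dest!: derangements_on_support)
  also have "\<dots> = (\<Sum>T\<in>Pow {..<m}. real (derangement_number (card T)))"
    by (simp add: card_derangements_on finite_subset)
  also have "\<dots> = (\<Sum>k\<le>m. \<Sum>T | T \<subseteq> {..<m} \<and> card T = k. real (derangement_number k))"
    by (subst sum.group[symmetric, where g = card]) (auto dest: card_mono[OF finite_lessThan] intro!: sum.cong)
  also have "\<dots> = (\<Sum>k\<le>m. of_nat (m choose k) * real (derangement_number k))"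
    using n_subsets[of "{..<m}"] by simp
  finally show ?thesis .
qed

definition alt_inv_fact :: "nat \<Rightarrow> real" where
  "alt_inv_fact k = (-1) ^ k / fact k"

text \<open>\<open>der_frac m\<close> is the proportion \<open>D(m) / m!\<close> of derangements among the permutations of
  \<open>m\<close> points (\<open>derangement_number_eq\<close>).\<close>
definition der_frac :: "nat \<Rightarrow> real" where
  "der_frac m = (\<Sum>k\<le>m. alt_inv_fact k)"

lemma der_frac_0 [simp]: "der_frac 0 = 1"
  by (simp add: der_frac_def alt_inv_fact_def)

lemma der_frac_Suc: "der_frac (Suc m) = der_frac m + alt_inv_fact (Suc m)"
  by (simp add: der_frac_def)

lemma sum_alt_inv_fact_div_fact:
  assumes "M > 0"
  shows "(\<Sum>k\<le>M. alt_inv_fact k / fact (M - k)) = 0"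
proof -
  have "(\<Sum>k\<le>M. alt_inv_fact k / fact (M - k)) = (\<Sum>k\<le>M. (-1) ^ k * of_nat (M choose k)) / fact M"
    unfolding sum_divide_distrib alt_inv_fact_def
    by (rule sum.cong) (simp_all add: binomial_fact)
  also have "\<dots> = 0"
    using choose_alternating_sum[OF assms] by simp
  finally show ?thesis .
qed

lemma sum_der_frac_div_fact: "(\<Sum>k\<le>m. der_frac k / fact (m - k)) = 1"
proof (induction m)
  case (Suc m)
  have "(\<Sum>k\<le>Suc m. der_frac k / fact (Suc m - k))
      = 1 / fact (Suc m) + (\<Sum>k\<le>m. der_frac (Suc k) / fact (m - k))"
    by (subst sum.atMost_Suc_shift) simp
  also have "\<dots> = (1 / fact (Suc m) + (\<Sum>k\<le>m. alt_inv_fact (Suc k) / fact (m - k)))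
      + (\<Sum>k\<le>m. der_frac k / fact (m - k))"
    by (simp add: der_frac_Suc add_divide_distrib sum.distrib)
  also have "1 / fact (Suc m) + (\<Sum>k\<le>m. alt_inv_fact (Suc k) / fact (m - k))
      = (\<Sum>k\<le>Suc m. alt_inv_fact k / fact (Suc m - k))"
    by (simp only: sum.atMost_Suc_shift) (simp add: alt_inv_fact_def)
  finally show ?case
    using sum_alt_inv_fact_div_fact[of "Suc m"] Suc.IH by simp
qed simp

lemma derangement_number_eq: "real (derangement_number m) = fact m * der_frac m"
proof (induction m rule: less_induct)
  case (less m)
  have "fact m = (\<Sum>k<m. of_nat (m choose k) * real (derangement_number k)) + real (derangement_number m)"
    using fact_eq_sum_derangement_number[of m] by (simp add: lessThan_Suc_atMost[symmetric])
  also have "(\<Sum>k<m. of_nat (m choose k) * real (derangement_number k)) = (\<Sum>k<m. fact m * (der_frac k / fact (m - k)))"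
    using less by (intro sum.cong) (simp_all add: binomial_fact field_simps)
  finally have "fact m = fact m * (\<Sum>k<m. der_frac k / fact (m - k)) + real (derangement_number m)"
    by (simp add: sum_distrib_left)
  moreover have "fact m = fact m * (\<Sum>k<m. der_frac k / fact (m - k)) + fact m * der_frac m"
    using sum_der_frac_div_fact[of m] by (simp add: lessThan_Suc_atMost[symmetric] flip: distrib_left)
  ultimately show ?case by simp
qed

section \<open>Maps with prescribed fibre sizes\<close>

definition maps_with_fibres :: "nat \<Rightarrow> nat \<Rightarrow> (nat \<Rightarrow> nat) \<Rightarrow> (nat \<Rightarrow> nat) set" where
  "maps_with_fibres n l g = {f \<in> {..<n} \<rightarrow>\<^sub>E {..<l}. \<forall>i<l. card {x \<in> {..<n}. f x = i} = g i}"

lemma count_mset_map_upt: "count (mset (map f [0..<n])) i = card {x \<in> {..<n}. f x = i}"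
proof -
  have "count (mset (map f [0..<n])) i = card {x. x < n \<and> i = map f [0..<n] ! x}"
    by (simp only: count_mset count_list_eq_length_filter length_filter_conv_card length_map length_upt diff_zero)
  also have "\<dots> = card {x \<in> {..<n}. f x = i}"
    by (rule arg_cong[where f = card]) auto
  finally show ?thesis .
qed

lemma bij_betw_maps_with_fibres_permutations_of_multiset:
  assumes "(\<Sum>i<l. g i) = n"
  shows "bij_betw (\<lambda>f. map f [0..<n]) (maps_with_fibres n l g)
    (permutations_of_multiset (\<Sum>i<l. replicate_mset (g i) i))"
proof -
  define M where "M = (\<Sum>i<l. replicate_mset (g i) i)"
  have size_M: "size M = n"
    unfolding M_def assms[symmetric] by (induction l) simp_all
  have set_M: "set_mset M \<subseteq> {..<l}"
    by (auto simp: M_def set_mset_sum)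
  have mset_iff: "mset (map f [0..<n]) = M \<longleftrightarrow> f \<in> maps_with_fibres n l g"
    if "f \<in> {..<n} \<rightarrow>\<^sub>E {..<l}" for f
    using that unfolding multiset_eq_iff count_mset_map_upt maps_with_fibres_def
    by (auto simp: M_def count_sum sum.delta' PiE_iff)
  have "inj_on (\<lambda>f. map f [0..<n]) (maps_with_fibres n l g)"
  proof (rule inj_onI)
    fix f f' assume "f \<in> maps_with_fibres n l g" "f' \<in> maps_with_fibres n l g"
      and "map f [0..<n] = map f' [0..<n]"
    then show "f = f'"
      by (intro extensionalityI[of _ "{..<n}"]) (auto simp: maps_with_fibres_def map_eq_conv PiE_iff)
  qed
  moreover have "(\<lambda>f. map f [0..<n]) ` maps_with_fibres n l g = permutations_of_multiset M"
  proof (intro equalityI subsetI)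
    fix xs assume "xs \<in> permutations_of_multiset M"
    then have xs: "mset xs = M" by (rule permutations_of_multisetD)
    then have len: "length xs = n"
      using size_M size_mset[of xs] by simp
    define f where "f = restrict (\<lambda>x. xs ! x) {..<n}"
    have "map f [0..<n] = map (\<lambda>i. xs ! i) [0..<length xs]"
      using len by (simp add: f_def)
    then have map_f: "map f [0..<n] = xs"
      by (simp add: map_nth)
    have "xs ! x \<in> set_mset M" if "x < n" for x
      using nth_mem[of x xs] that len unfolding xs[symmetric] by simp
    then have "f \<in> {..<n} \<rightarrow>\<^sub>E {..<l}"
      using set_M by (auto simp: f_def restrict_PiE_iff)
    then have "f \<in> maps_with_fibres n l g"
      using mset_iff map_f xs by blast
    then show "xs \<in> (\<lambda>f. map f [0..<n]) ` maps_with_fibres n l g"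
      using map_f by (intro image_eqI[where x = f]) simp_all
  next
    fix xs assume "xs \<in> (\<lambda>f. map f [0..<n]) ` maps_with_fibres n l g"
    then show "xs \<in> permutations_of_multiset M"
      using mset_iff by (auto simp: maps_with_fibres_def intro: permutations_of_multisetI)
  qed
  ultimately show ?thesis
    unfolding M_def by (rule bij_betw_imageI)
qed

lemma card_maps_with_fibres:
  assumes "(\<Sum>i<l. g i) = n"
  shows "card (maps_with_fibres n l g) * (\<Prod>i<l. fact (g i)) = fact n"
proof -
  define M where "M = (\<Sum>i<l. replicate_mset (g i) i)"
  have count_M: "count M i = (if i < l then g i else 0)" for i
    by (simp add: M_def count_sum sum.delta')
  have set_M: "set_mset M \<subseteq> {..<l}"
    by (auto simp: M_def set_mset_sum)
  have "card (maps_with_fibres n l g) = card (permutations_of_multiset M)"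
    unfolding M_def by (rule bij_betw_same_card[OF bij_betw_maps_with_fibres_permutations_of_multiset[OF assms]])
  moreover have "(\<Prod>x\<in>set_mset M. fact (count M x)) = (\<Prod>i<l. fact (count M i))"
    using set_M by (intro prod.mono_neutral_left) (simp_all add: not_in_iff)
  moreover have "(\<Prod>i<l. fact (count M i)) = (\<Prod>i<l. fact (g i))"
    by (simp add: count_M)
  moreover have "size M = n"
    unfolding M_def assms[symmetric] by (induction l) simp_all
  ultimately show ?thesis
    using card_permutations_of_multiset_aux[of M] by metis
qed

lemma restrict_id_in_derangements_on:
  assumes "w \<in> derangements_on S" "Y \<subseteq> S" "finite Y" "w ` Y \<subseteq> Y"
  shows "restrict_id w Y \<in> derangements_on Y"
proof -
  have "w permutes S" and fixfree: "\<forall>x\<in>S. w x \<noteq> x"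
    using assms(1) by (auto simp: derangements_on_def)
  then have "inj_on w Y"
    using assms(2) permutes_inj_on inj_on_subset by blast
  then have "restrict_id w Y permutes Y"
    using assms(3,4) by (intro inj_imp_permutes) (auto simp: inj_on_def)
  then show ?thesis
    using fixfree assms(2) by (auto simp: derangements_on_def)
qed

lemma glue_derangements_on_fibres:
  assumes "finite S" "f ` S \<subseteq> I" "q \<in> (\<Pi>\<^sub>E i\<in>I. derangements_on {x \<in> S. f x = i})"
  shows "(\<lambda>x. if x \<in> S then q (f x) x else x) \<in> {w \<in> derangements_on S. \<forall>x\<in>S. f (w x) = f x}"
    (is "?w \<in> _")
proof -
  have q_perm: "q (f x) permutes {y \<in> S. f y = f x}" and q_fixfree: "q (f x) x \<noteq> x"
    and q_fibre: "q (f x) x \<in> S \<and> f (q (f x) x) = f x" if "x \<in> S" for x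
    using assms(2,3) that permutes_in_image by (fastforce simp: derangements_on_def)+
  have "inj_on ?w S"
  proof (rule inj_onI)
    fix x y assume xy: "x \<in> S" "y \<in> S" and eq: "?w x = ?w y"
    then have "f x = f y"
      using q_fibre[OF xy(1)] q_fibre[OF xy(2)] by simp
    then show "x = y"
      using eq xy permutes_inj[OF q_perm[OF xy(1)]] by (simp add: inj_def)
  qed
  then have "?w permutes S"
    using assms(1) q_fibre by (intro inj_imp_permutes) auto
  then show ?thesis
    using q_fixfree q_fibre by (auto simp: derangements_on_def)
qed

text \<open>A derangement preserving the fibres of \<open>f\<close> is the same as a family of derangements of
  the individual fibres.\<close>
lemma card_fibre_preserving_derangements_on:
  assumes "finite S" "finite I" "f ` S \<subseteq> I"
  shows "card {w \<in> derangements_on S. \<forall>x\<in>S. f (w x) = f x}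
    = (\<Prod>i\<in>I. derangement_number (card {x \<in> S. f x = i}))"
proof -
  define Y where "Y i = {x \<in> S. f x = i}" for i
  define W where "W = {w \<in> derangements_on S. \<forall>x\<in>S. f (w x) = f x}"
  define restr where "restr w = (\<lambda>i\<in>I. restrict_id w (Y i))" for w
  define glue where "glue q = (\<lambda>x. if x \<in> S then q (f x) x else x)" for q
  have finite_Y: "finite (Y i)" for i
    using assms(1) by (simp add: Y_def)
  have restr_in: "restr ` W \<subseteq> (\<Pi>\<^sub>E i\<in>I. derangements_on (Y i))"
  proof safe
    fix w i assume w: "w \<in> W" and "i \<in> I"
    then have "w ` Y i \<subseteq> Y i"
      using permutes_in_image by (fastforce simp: W_def Y_def derangements_on_def)
    then have "restrict_id w (Y i) \<in> derangements_on (Y i)"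
      using w finite_Y by (intro restrict_id_in_derangements_on) (auto simp: W_def Y_def)
    then show "restr w i \<in> derangements_on (Y i)"
      using \<open>i \<in> I\<close> by (simp add: restr_def)
  qed (simp add: restr_def)
  have glue_in: "glue ` (\<Pi>\<^sub>E i\<in>I. derangements_on (Y i)) \<subseteq> W"
    using glue_derangements_on_fibres[OF assms(1,3)] by (auto simp: glue_def W_def Y_def)
  have glue_restr: "glue (restr w) = w" if "w \<in> W" for w
  proof
    fix x
    have "w permutes S"
      using that by (simp add: W_def derangements_on_def)
    then show "glue (restr w) x = w x"
      using assms(3) permutes_not_in[of w S x] by (auto simp: glue_def restr_def Y_def)
  qed
  have restr_glue: "restr (glue q) = q" if q: "q \<in> (\<Pi>\<^sub>E i\<in>I. derangements_on (Y i))" for q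
  proof (rule extensionalityI[of _ I])
    fix i assume "i \<in> I"
    then have "q i permutes Y i"
      using q by (auto simp: derangements_on_def)
    then show "restr (glue q) i = q i"
      using \<open>i \<in> I\<close> permutes_not_in[of "q i" "Y i"]
      by (auto simp: restr_def glue_def restrict_id_def Y_def)
  qed (use q in \<open>auto simp: restr_def PiE_iff\<close>)
  have "bij_betw restr W (\<Pi>\<^sub>E i\<in>I. derangements_on (Y i))"
    using restr_in glue_in glue_restr restr_glue by (intro bij_betw_byWitness[where f' = glue]) auto
  then have "card W = (\<Prod>i\<in>I. card (derangements_on (Y i)))"
    using assms(2) by (simp add: bij_betw_same_card card_PiE)
  then show ?thesis
    by (simp add: W_def Y_def card_derangements_on finite_Y[unfolded Y_def])
qed

section \<open>The eigenvalues as determinants\<close>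

text \<open>\<open>jt_det h \<lambda>\<close> is the determinant \<open>det (h (\<lambda>\<^sub>i - i + j))\<^sub>i\<^sub>,\<^sub>j\<close> (indices from 0), with \<open>h\<close>
  taken to vanish at negative arguments; \<open>jt_admissible \<lambda> \<sigma>\<close> says that the entries selected by
  \<open>\<sigma>\<close> all have nonnegative argument.\<close>
definition jt_admissible :: "nat list \<Rightarrow> (nat \<Rightarrow> nat) \<Rightarrow> bool" where
  "jt_admissible lam \<sigma> \<longleftrightarrow> (\<forall>i<length lam. i \<le> lam ! i + \<sigma> i)"

definition jt_det :: "(nat \<Rightarrow> real) \<Rightarrow> nat list \<Rightarrow> real" where
  "jt_det h lam = (\<Sum>\<sigma> | \<sigma> permutes {..<length lam}. of_int (sign \<sigma>) *
     (if jt_admissible lam \<sigma> then \<Prod>i<length lam. h (lam ! i + \<sigma> i - i) else 0))"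

lemma frob_char_eq_sum:
  "frob_char lam n w = (\<Sum>\<sigma> | \<sigma> permutes {..<length lam}. sign \<sigma> *
     (if jt_admissible lam \<sigma>
      then int (card {f \<in> maps_with_fibres n (length lam) (\<lambda>i. lam ! i + \<sigma> i - i). \<forall>x<n. f (w x) = f x})
      else 0))"
proof -
  let ?l = "length lam"
  have "{f \<in> {..<n} \<rightarrow>\<^sub>E {..<?l}. (\<forall>x<n. f (w x) = f x) \<and>
          (\<forall>i<?l. (?l - 1 - \<sigma> i) + card {x \<in> {..<n}. f x = i} = lam ! i + (?l - 1 - i))}
      = (if jt_admissible lam \<sigma>
         then {f \<in> maps_with_fibres n ?l (\<lambda>i. lam ! i + \<sigma> i - i). \<forall>x<n. f (w x) = f x} else {})"
    if "\<sigma> permutes {..<?l}" for \<sigma>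
  proof -
    have "(?l - 1 - \<sigma> i) + c = lam ! i + (?l - 1 - i) \<longleftrightarrow> i \<le> lam ! i + \<sigma> i \<and> c = lam ! i + \<sigma> i - i"
      if "i < ?l" for i c
      using permutes_in_image[OF \<open>\<sigma> permutes _\<close>, of i] that by auto
    then have "(\<forall>i<?l. (?l - 1 - \<sigma> i) + card {x \<in> {..<n}. f x = i} = lam ! i + (?l - 1 - i))
        \<longleftrightarrow> (\<forall>i<?l. i \<le> lam ! i + \<sigma> i) \<and> (\<forall>i<?l. card {x \<in> {..<n}. f x = i} = lam ! i + \<sigma> i - i)"
      for f by blast
    then show ?thesis
      by (auto simp: maps_with_fibres_def jt_admissible_def)
  qed
  then show ?thesis
    unfolding frob_char_def Let_def by (intro sum.cong) auto
qed

lemma sum_derangements_card_invariant_maps: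
  assumes "(\<Sum>i<l. g i) = n"
  shows "(\<Sum>w\<in>derangements n. real (card {f \<in> maps_with_fibres n l g. \<forall>x<n. f (w x) = f x}))
    = fact n * (\<Prod>i<l. der_frac (g i))"
proof -
  let ?F = "maps_with_fibres n l g"
  have fin: "finite (derangements n)" "finite ?F"
    by (simp_all add: derangements_eq_derangements_on finite_derangements_on maps_with_fibres_def finite_PiE)
  have "(\<Sum>w\<in>derangements n. card {f \<in> ?F. \<forall>x<n. f (w x) = f x})
      = (\<Sum>f\<in>?F. card {w \<in> derangements n. \<forall>x<n. f (w x) = f x})"
    using sum.swap_restrict[OF fin, of "\<lambda>_ _. 1::nat" "\<lambda>w f. \<forall>x<n. f (w x) = f x"] by simp
  also have "\<dots> = (\<Sum>f\<in>?F. \<Prod>i<l. derangement_number (g i))"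
  proof (rule sum.cong)
    fix f assume f: "f \<in> ?F"
    then have "card {w \<in> derangements_on {..<n}. \<forall>x\<in>{..<n}. f (w x) = f x}
        = (\<Prod>i<l. derangement_number (card {x \<in> {..<n}. f x = i}))"
      by (intro card_fibre_preserving_derangements_on) (auto simp: maps_with_fibres_def)
    then show "card {w \<in> derangements n. \<forall>x<n. f (w x) = f x} = (\<Prod>i<l. derangement_number (g i))"
      using f by (simp add: derangements_eq_derangements_on maps_with_fibres_def Ball_def)
  qed simp
  finally have "(\<Sum>w\<in>derangements n. real (card {f \<in> ?F. \<forall>x<n. f (w x) = f x}))
      = real (card ?F) * (\<Prod>i<l. fact (g i)) * (\<Prod>i<l. der_frac (g i))"
    by (simp add: derangement_number_eq prod.distrib flip: of_nat_sum)
  also have "real (card ?F) * (\<Prod>i<l. fact (g i)) = fact n"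
    using arg_cong[OF card_maps_with_fibres[OF assms], of real] by simp
  finally show ?thesis .
qed

lemma card_maps_with_fibres_real:
  assumes "(\<Sum>i<l. g i) = n"
  shows "real (card (maps_with_fibres n l g)) = fact n * (\<Prod>i<l. 1 / fact (g i))"
  using arg_cong[OF card_maps_with_fibres[OF assms], of real]
  by (simp add: prod_dividef field_simps)

lemma sum_jt_indices:
  assumes "\<sigma> permutes {..<length lam}" "jt_admissible lam \<sigma>"
  shows "(\<Sum>i<length lam. lam ! i + \<sigma> i - i) = sum_list lam"
proof -
  have "(\<Sum>i<length lam. lam ! i + \<sigma> i - i) + (\<Sum>i<length lam. i)
      = (\<Sum>i<length lam. lam ! i) + (\<Sum>i<length lam. \<sigma> i)"
    using assms(2) by (simp add: jt_admissible_def flip: sum.distrib)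
  moreover have "(\<Sum>i<length lam. \<sigma> i) = (\<Sum>i<length lam. i)"
    using sum.permute[OF assms(1), of id] by simp
  ultimately show ?thesis
    by (simp add: sum_list_sum_nth atLeast0LessThan)
qed

lemma sum_derangements_frob_char:
  assumes "sum_list lam = n"
  shows "(\<Sum>w\<in>derangements n. real_of_int (frob_char lam n w)) = fact n * jt_det der_frac lam"
  unfolding frob_char_eq_sum jt_det_def of_int_sum sum_distrib_left
proof (subst sum.swap, intro sum.cong refl)
  fix \<sigma> assume "\<sigma> \<in> {\<sigma>. \<sigma> permutes {..<length lam}}"
  then show "(\<Sum>w\<in>derangements n. real_of_int (sign \<sigma> * (if jt_admissible lam \<sigma>
        then int (card {f \<in> maps_with_fibres n (length lam) (\<lambda>i. lam ! i + \<sigma> i - i). \<forall>x<n. f (w x) = f x})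
        else 0)))
      = fact n * (of_int (sign \<sigma>) * (if jt_admissible lam \<sigma>
        then \<Prod>i<length lam. der_frac (lam ! i + \<sigma> i - i) else 0))"
    by (cases "jt_admissible lam \<sigma>")
       (simp_all add: sum_distrib_left[symmetric] sum_derangements_card_invariant_maps sum_jt_indices assms)
qed

lemma frob_char_id:
  assumes "sum_list lam = n"
  shows "real_of_int (frob_char lam n id) = fact n * jt_det (\<lambda>k. 1 / fact k) lam"
  unfolding frob_char_eq_sum jt_det_def of_int_sum sum_distrib_left
  by (intro sum.cong refl) (simp add: card_maps_with_fibres_real sum_jt_indices assms)

lemma eta_eq_jt_det:
  assumes "sum_list lam = n"
  shows "eta lam n = jt_det der_frac lam / jt_det (\<lambda>k. 1 / fact k) lam"
  unfolding eta_def sum_derangements_frob_char[OF assms] frob_char_id[OF assms] by simp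

section \<open>Determinants with two and three rows\<close>

lemma sum_permutes_2:
  fixes F :: "nat \<Rightarrow> nat \<Rightarrow> 'a::comm_ring_1"
  shows "(\<Sum>\<sigma> | \<sigma> permutes {..<2::nat}. of_int (sign \<sigma>) * F (\<sigma> 0) (\<sigma> 1)) = F 0 1 - F 1 0"
proof -
  have "{..<2::nat} = {0, 1}" by auto
  then show ?thesis
    by (simp add: sum_over_permutations_insert sign_compose permutation_swap_id sign_swap_id)
qed

lemma sum_permutes_3:
  fixes F :: "nat \<Rightarrow> nat \<Rightarrow> nat \<Rightarrow> 'a::comm_ring_1"
  shows "(\<Sum>\<sigma> | \<sigma> permutes {..<3::nat}. of_int (sign \<sigma>) * F (\<sigma> 0) (\<sigma> 1) (\<sigma> 2))
    = F 0 1 2 - F 0 2 1 - F 1 0 2 + F 1 2 0 + F 2 0 1 - F 2 1 0"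
proof -
  have "{..<3::nat} = {0, 1, 2}" by auto
  then show ?thesis
    by (simp add: sum_over_permutations_insert sign_compose permutation_swap_id sign_swap_id)
qed

lemma jt_det_two_rows: "jt_det h [a, Suc b] = h a * h (Suc b) - h (Suc a) * h b"
proof -
  have "jt_det h [a, Suc b] = (\<Sum>\<sigma> | \<sigma> permutes {..<2}. of_int (sign \<sigma>) * (h (a + \<sigma> 0) * h (b + \<sigma> 1)))"
    unfolding jt_det_def by (intro sum.cong) (simp_all add: jt_admissible_def All_less_Suc eval_nat_numeral mult_ac)
  also have "\<dots> = h a * h (Suc b) - h (Suc a) * h b"
    by (subst sum_permutes_2[of "\<lambda>x y. h (a + x) * h (b + y)"]) simp
  finally show ?thesis .
qed

lemma jt_det_three_rows:
  "jt_det h [a, Suc b, Suc (Suc c)]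
    = h a * (h (b + 1) * h (c + 2) - h (b + 2) * h (c + 1))
    - h (a + 1) * (h b * h (c + 2) - h (b + 2) * h c)
    + h (a + 2) * (h b * h (c + 1) - h (b + 1) * h c)"
proof -
  have "jt_det h [a, Suc b, Suc (Suc c)]
      = (\<Sum>\<sigma> | \<sigma> permutes {..<3}. of_int (sign \<sigma>) * (h (a + \<sigma> 0) * h (b + \<sigma> 1) * h (c + \<sigma> 2)))"
    unfolding jt_det_def by (intro sum.cong) (simp_all add: jt_admissible_def All_less_Suc eval_nat_numeral mult_ac)
  also have "\<dots> = h a * (h (b + 1) * h (c + 2) - h (b + 2) * h (c + 1))
      - h (a + 1) * (h b * h (c + 2) - h (b + 2) * h c)
      + h (a + 2) * (h b * h (c + 1) - h (b + 1) * h c)"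
    by (subst sum_permutes_3[of "\<lambda>x y z. h (a + x) * h (b + y) * h (c + z)"]) (simp add: algebra_simps)
  finally show ?thesis .
qed

lemma jt_det_hook:
  "jt_det h [a, Suc b, 1]
    = h 1 * (h a * h (b + 1) - h (a + 1) * h b) - h 0 * (h a * h (b + 2) - h (a + 2) * h b)"
proof -
  have "jt_det h [a, Suc b, 1]
      = (\<Sum>\<sigma> | \<sigma> permutes {..<3}. of_int (sign \<sigma>) *
           (h (a + \<sigma> 0) * h (b + \<sigma> 1) * (if \<sigma> 2 = 0 then 0 else h (\<sigma> 2 - 1))))"
    unfolding jt_det_def by (intro sum.cong) (auto simp: jt_admissible_def All_less_Suc eval_nat_numeral mult_ac)
  also have "\<dots> = h 1 * (h a * h (b + 1) - h (a + 1) * h b) - h 0 * (h a * h (b + 2) - h (a + 2) * h b)"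
    by (subst sum_permutes_3[of "\<lambda>x y z. h (a + x) * h (b + y) * (if z = 0 then 0 else h (z - 1))"])
       (simp add: algebra_simps)
  finally show ?thesis .
qed

section \<open>Bounds on \<open>der_frac\<close>\<close>

lemma alt_inv_fact_Suc: "alt_inv_fact (Suc k) = - alt_inv_fact k / (real k + 1)"
  by (simp add: alt_inv_fact_def field_simps)

lemma abs_alt_inv_fact: "\<bar>alt_inv_fact k\<bar> = 1 / fact k"
  by (simp add: alt_inv_fact_def abs_divide)

lemma der_frac_values:
  "der_frac (Suc 0) = 0" "der_frac 2 = 1/2" "der_frac 3 = 1/3" "der_frac 4 = 3/8"
  by (simp_all add: der_frac_def alt_inv_fact_def eval_nat_numeral)

text \<open>The recurrence \<open>D(m + 2) = (m + 1) (D(m + 1) + D(m))\<close>: \<open>der_frac (m + 2)\<close> is a convex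
  combination of the two previous values.\<close>
lemma der_frac_Suc_Suc:
  "(real m + 2) * der_frac (m + 2) = (real m + 1) * der_frac (m + 1) + der_frac m"
proof -
  have "der_frac (m + 2) = der_frac (m + 1) - alt_inv_fact (m + 1) / (real m + 2)"
    using der_frac_Suc[of "Suc m"] alt_inv_fact_Suc[of "Suc m"] by simp
  moreover have "alt_inv_fact (m + 1) = der_frac (m + 1) - der_frac m"
    using der_frac_Suc[of m] by simp
  ultimately show ?thesis
    by (simp add: field_simps)
qed

lemma der_frac_bounds:
  assumes "3 \<le> m"
  shows "1/3 \<le> der_frac m \<and> der_frac m \<le> 3/8"
proof -
  have "(1/3 \<le> der_frac m \<and> der_frac m \<le> 3/8) \<and> (1/3 \<le> der_frac (m + 1) \<and> der_frac (m + 1) \<le> 3/8)"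
    using assms
  proof (induction m rule: nat_induct_at_least)
    case base
    then show ?case by (simp add: der_frac_values)
  next
    case (Suc m)
    have "(real m + 1) * (1/3) \<le> (real m + 1) * der_frac (m + 1)"
      using Suc.IH by (intro mult_left_mono) auto
    moreover have "(real m + 1) * der_frac (m + 1) \<le> (real m + 1) * (3/8)"
      using Suc.IH by (intro mult_left_mono) auto
    ultimately have "(real m + 2) * (1/3) \<le> (real m + 2) * der_frac (m + 2)"
      "(real m + 2) * der_frac (m + 2) \<le> (real m + 2) * (3/8)"
      using der_frac_Suc_Suc[of m] Suc.IH by (simp_all add: algebra_simps)
    then have "1/3 \<le> der_frac (m + 2)" "der_frac (m + 2) \<le> 3/8"
      unfolding mult_le_cancel_left_pos[OF add_nonneg_pos[OF of_nat_0_le_iff zero_less_numeral]] .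
    then show ?case
      using Suc.IH by simp
  qed
  then show ?thesis by blast
qed

lemma der_frac_nonneg: "0 \<le> der_frac m"
proof -
  consider "m = 0" | "m = 1" | "m = 2" | "3 \<le> m" by linarith
  then show ?thesis
    by cases (use der_frac_bounds[of m] in \<open>simp_all add: der_frac_values\<close>)
qed

lemma der_frac_le_one: "der_frac m \<le> 1"
proof -
  consider "m = 0" | "m = 1" | "m = 2" | "3 \<le> m" by linarith
  then show ?thesis
    by cases (use der_frac_bounds[of m] in \<open>simp_all add: der_frac_values\<close>)
qed

lemma der_frac_le_half: "1 \<le> m \<Longrightarrow> der_frac m \<le> 1/2"
proof -
  assume "1 \<le> m"
  then consider "m = 1" | "m = 2" | "3 \<le> m" by linarith
  then show ?thesis
    by cases (use der_frac_bounds[of m] in \<open>simp_all add: der_frac_values\<close>)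
qed

section \<open>The eigenvalues of two- and three-row shapes\<close>

lemma inverse_fact_eq_Suc: "1 / fact k = (real k + 1) / (fact (k + 1) :: real)"
  by (simp add: divide_simps)

lemma fact_add_2: "(fact (k + 2) :: real) = (real k + 2) * fact (k + 1)"
  by (simp add: algebra_simps)

lemma inverse_fact_eq_add_2:
  "1 / fact k = (real k + 2) * (real k + 1) * (1 / (fact (k + 2) :: real))"
  "1 / fact (k + 1) = (real k + 2) * (1 / (fact (k + 2) :: real))"
proof -
  have "real k + 2 \<noteq> 0" "real k + 1 \<noteq> 0" "(fact (k + 1) :: real) = (real k + 1) * fact k"
    by simp_all
  then show "1 / fact k = (real k + 2) * (real k + 1) * (1 / (fact (k + 2) :: real))"
    "1 / fact (k + 1) = (real k + 2) * (1 / (fact (k + 2) :: real))"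
    unfolding fact_add_2 by (simp_all del: fact_Suc)
qed

lemma neg_eta_two_rows_eq:
  assumes "3 \<le> m"
  shows "- eta [m, 3] (m + 3) = (der_frac m + 3 * alt_inv_fact (m + 1)) * fact (m + 1) / (real m - 2)"
proof -
  have three: "Suc 2 = 3" by simp
  have "jt_det (\<lambda>k. 1 / fact k) [m, 3] = 1 / fact m * (1 / 6) - 1 / fact (m + 1) * (1 / 2)"
    using jt_det_two_rows[of "\<lambda>k. 1 / fact k" m 2] unfolding three by (simp add: eval_nat_numeral)
  also have "\<dots> = (real m - 2) / (6 * fact (m + 1))"
    unfolding inverse_fact_eq_Suc[of m] by (simp add: field_simps del: fact_Suc)
  finally have F: "jt_det (\<lambda>k. 1 / fact k) [m, 3] = (real m - 2) / (6 * fact (m + 1))" .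
  have N: "jt_det der_frac [m, 3] = der_frac m / 3 - der_frac (m + 1) / 2"
    using jt_det_two_rows[of der_frac m 2] unfolding three by (simp add: der_frac_values)
  show ?thesis
    using eta_eq_jt_det[of "[m, 3]" "m + 3"] assms der_frac_Suc[of m] by (simp add: F N field_simps)
qed

lemma neg_eta_two_rows_ge:
  assumes "3 \<le> m"
  shows "(fact (m + 1) / 3 - 3) / (real m - 2) \<le> - eta [m, 3] (m + 3)"
proof -
  have "1/3 - 3 / fact (m + 1) \<le> der_frac m + 3 * alt_inv_fact (m + 1)"
    using der_frac_bounds[OF assms] abs_alt_inv_fact[of "m + 1"] by linarith
  then have "(1/3 - 3 / fact (m + 1)) * fact (m + 1) \<le> (der_frac m + 3 * alt_inv_fact (m + 1)) * fact (m + 1)"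
    by (rule mult_right_mono) simp
  then have "fact (m + 1) / 3 - 3 \<le> (der_frac m + 3 * alt_inv_fact (m + 1)) * fact (m + 1)"
    by (simp add: left_diff_distrib del: fact_Suc)
  then show ?thesis
    unfolding neg_eta_two_rows_eq[OF assms] using assms by (simp add: divide_right_mono del: fact_Suc)
qed

lemma abs_alt_inv_fact_minor:
  "\<bar>alt_inv_fact (p + 1) * alt_inv_fact (q + 2) - alt_inv_fact (p + 2) * alt_inv_fact (q + 1)\<bar>
    = \<bar>real p - real q\<bar> / (fact (p + 2) * fact (q + 2))"
proof -
  have e: "alt_inv_fact (p + 2) = - alt_inv_fact (p + 1) / (real p + 2)"
    "alt_inv_fact (q + 1) = - (real q + 2) * alt_inv_fact (q + 2)"
    using alt_inv_fact_Suc[of "p + 1"] alt_inv_fact_Suc[of "q + 1"] by (simp_all add: field_simps)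
  have "alt_inv_fact (p + 1) * alt_inv_fact (q + 2) - alt_inv_fact (p + 2) * alt_inv_fact (q + 1)
      = alt_inv_fact (p + 1) * alt_inv_fact (q + 2) * (real p - real q) / (real p + 2)"
    unfolding e by (simp add: field_simps)
  then have "\<bar>alt_inv_fact (p + 1) * alt_inv_fact (q + 2) - alt_inv_fact (p + 2) * alt_inv_fact (q + 1)\<bar>
      = \<bar>alt_inv_fact (p + 1)\<bar> * \<bar>alt_inv_fact (q + 2)\<bar> * \<bar>real p - real q\<bar> / (real p + 2)"
    by (simp add: abs_mult)
  also have "\<dots> = \<bar>real p - real q\<bar> / ((real p + 2) * fact (p + 1) * fact (q + 2))"
    unfolding abs_alt_inv_fact by simp
  finally show ?thesis
    unfolding fact_add_2[of p] by (simp add: mult_ac)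
qed

lemma abs_alt_inv_fact_add_Suc:
  "\<bar>alt_inv_fact (k + 1) + alt_inv_fact (k + 2)\<bar> = (real k + 1) / fact (k + 2)"
proof -
  have e: "alt_inv_fact (k + 2) = - alt_inv_fact (k + 1) / (real k + 2)"
    using alt_inv_fact_Suc[of "k + 1"] by (simp add: field_simps)
  have "alt_inv_fact (k + 1) + alt_inv_fact (k + 2) = alt_inv_fact (k + 1) * (real k + 1) / (real k + 2)"
    unfolding e by (simp add: field_simps)
  then have "\<bar>alt_inv_fact (k + 1) + alt_inv_fact (k + 2)\<bar> = \<bar>alt_inv_fact (k + 1)\<bar> * (real k + 1) / (real k + 2)"
    by (simp add: abs_mult)
  also have "\<dots> = (real k + 1) / ((real k + 2) * fact (k + 1))"
    unfolding abs_alt_inv_fact by simp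
  finally show ?thesis
    unfolding fact_add_2[of k] .
qed

lemma der_frac_add_2:
  "der_frac (k + 1) = der_frac k + alt_inv_fact (k + 1)"
  "der_frac (k + 2) = der_frac k + alt_inv_fact (k + 1) + alt_inv_fact (k + 2)"
  using der_frac_Suc[of k] der_frac_Suc[of "Suc k"] by simp_all

lemma jt_det_der_frac_three_rows:
  "jt_det der_frac [a, Suc b, Suc (Suc c)]
    = der_frac a * (alt_inv_fact (b + 1) * alt_inv_fact (c + 2) - alt_inv_fact (b + 2) * alt_inv_fact (c + 1))
    - der_frac b * (alt_inv_fact (a + 1) * alt_inv_fact (c + 2) - alt_inv_fact (a + 2) * alt_inv_fact (c + 1))
    + der_frac c * (alt_inv_fact (a + 1) * alt_inv_fact (b + 2) - alt_inv_fact (a + 2) * alt_inv_fact (b + 1))"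
  unfolding jt_det_three_rows der_frac_add_2 by algebra

lemma jt_det_inv_fact_three_rows:
  "jt_det (\<lambda>k. 1 / fact k) [a, Suc b, Suc (Suc c)]
    = (real a - real b) * (real a - real c) * (real b - real c)
      * (1 / fact (a + 2)) * (1 / fact (b + 2)) * (1 / fact (c + 2))"
  unfolding jt_det_three_rows inverse_fact_eq_add_2[of a] inverse_fact_eq_add_2[of b] inverse_fact_eq_add_2[of c]
  by algebra

lemma jt_det_der_frac_hook:
  "jt_det der_frac [a, Suc b, 1]
    = der_frac b * (alt_inv_fact (a + 1) + alt_inv_fact (a + 2)) - der_frac a * (alt_inv_fact (b + 1) + alt_inv_fact (b + 2))"
  unfolding jt_det_hook der_frac_add_2 by (simp add: der_frac_values algebra_simps)

lemma jt_det_inv_fact_hook: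
  "jt_det (\<lambda>k. 1 / fact k) [a, Suc b, 1]
    = (real a - real b) * (real a + 1) * (real b + 1) * (1 / fact (a + 2)) * (1 / fact (b + 2))"
  unfolding jt_det_hook inverse_fact_eq_add_2[of a] inverse_fact_eq_add_2[of b]
  by simp algebra

lemma abs_three_terms_le:
  fixes u v w :: real
  assumes "\<bar>u\<bar> \<le> U" "\<bar>v\<bar> \<le> V" "\<bar>w\<bar> \<le> W"
  shows "\<bar>u - v + w\<bar> \<le> U + V + W"
  using assms by linarith

lemma abs_two_terms_le:
  fixes u v :: real
  assumes "\<bar>u\<bar> \<le> U" "\<bar>v\<bar> \<le> V"
  shows "\<bar>u - v\<bar> \<le> U + V"
  using assms by linarith

lemma abs_eta_three_rows_le:
  assumes "c < b" "b < a"
  shows "\<bar>eta [a, Suc b, Suc (Suc c)] (a + b + c + 3)\<bar>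
    \<le> der_frac a * fact (a + 2) / ((real a - real b) * (real a - real c))
     + der_frac b * fact (b + 2) / ((real a - real b) * (real b - real c))
     + der_frac c * fact (c + 2) / ((real a - real c) * (real b - real c))"
proof -
  define x y z where "x = real a - real b" and "y = real a - real c" and "z = real b - real c"
  define A B C :: real where "A = 1 / fact (a + 2)" and "B = 1 / fact (b + 2)"
    and "C = 1 / fact (c + 2)"
  have pos: "x > 0" "y > 0" "z > 0" "A > 0" "B > 0" "C > 0"
    using assms by (simp_all add: x_def y_def z_def A_def B_def C_def)
  have N: "\<bar>jt_det der_frac [a, Suc b, Suc (Suc c)]\<bar>
      \<le> der_frac a * (z * B * C) + der_frac b * (y * A * C) + der_frac c * (x * A * B)"
    unfolding jt_det_der_frac_three_rows
    using abs_alt_inv_fact_minor[of b c] abs_alt_inv_fact_minor[of a c] abs_alt_inv_fact_minor[of a b]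
      der_frac_nonneg[of a] der_frac_nonneg[of b] der_frac_nonneg[of c] pos
    by (intro abs_three_terms_le) (simp_all add: x_def y_def z_def A_def B_def C_def abs_mult)
  have F: "jt_det (\<lambda>k. 1 / fact k) [a, Suc b, Suc (Suc c)] = x * y * z * A * B * C"
    by (simp add: jt_det_inv_fact_three_rows x_def y_def z_def A_def B_def C_def)
  have "\<bar>eta [a, Suc b, Suc (Suc c)] (a + b + c + 3)\<bar>
      = \<bar>jt_det der_frac [a, Suc b, Suc (Suc c)]\<bar> / (x * y * z * A * B * C)"
    using pos by (simp add: eta_eq_jt_det F abs_divide)
  also have "\<dots> \<le> (der_frac a * (z * B * C) + der_frac b * (y * A * C) + der_frac c * (x * A * B))
      / (x * y * z * A * B * C)"
    using N pos by (simp add: divide_right_mono)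
  also have "\<dots> = der_frac a / (x * y * A) + der_frac b / (x * z * B) + der_frac c / (y * z * C)"
    using pos by (simp add: field_simps)
  finally show ?thesis
    by (simp add: x_def y_def z_def A_def B_def C_def)
qed

lemma abs_eta_hook_le:
  assumes "b < a"
  shows "\<bar>eta [a, Suc b, 1] (a + b + 2)\<bar>
    \<le> der_frac a * fact (a + 2) / ((real a - real b) * (real a + 1))
     + der_frac b * fact (b + 2) / ((real a - real b) * (real b + 1))"
proof -
  define x y z where "x = real a - real b" and "y = real a + 1" and "z = real b + 1"
  define A B :: real where "A = 1 / fact (a + 2)" and "B = 1 / fact (b + 2)"
  have pos: "x > 0" "y > 0" "z > 0" "A > 0" "B > 0"
    using assms by (simp_all add: x_def y_def z_def A_def B_def)
  have N: "\<bar>jt_det der_frac [a, Suc b, 1]\<bar> \<le> der_frac b * (y * A) + der_frac a * (z * B)"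
    unfolding jt_det_der_frac_hook
    using abs_alt_inv_fact_add_Suc[of a] abs_alt_inv_fact_add_Suc[of b]
      der_frac_nonneg[of a] der_frac_nonneg[of b]
    by (intro abs_two_terms_le) (simp_all add: y_def z_def A_def B_def abs_mult)
  have F: "jt_det (\<lambda>k. 1 / fact k) [a, Suc b, 1] = x * y * z * A * B"
    unfolding jt_det_inv_fact_hook by (simp add: x_def y_def z_def A_def B_def)
  have "sum_list [a, Suc b, 1] = a + b + 2" by simp
  have "\<bar>eta [a, Suc b, 1] (a + b + 2)\<bar> = \<bar>jt_det der_frac [a, Suc b, 1]\<bar> / (x * y * z * A * B)"
    unfolding eta_eq_jt_det[OF \<open>sum_list [a, Suc b, 1] = a + b + 2\<close>] F using pos by (simp add: abs_divide)
  also have "\<dots> \<le> (der_frac b * (y * A) + der_frac a * (z * B)) / (x * y * z * A * B)"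
    using N pos by (simp add: divide_right_mono)
  also have "\<dots> = der_frac a / (x * y * A) + der_frac b / (x * z * B)"
    using pos by (simp add: field_simps)
  finally show ?thesis
    by (simp add: x_def y_def z_def A_def B_def)
qed

section \<open>Comparison with the shape \<open>(n - 3, 3)\<close>\<close>

lemma fact_add_2_ge:
  assumes "3 \<le> a"
  shows "6 * ((real a + 1) * (real a + 2)) \<le> (fact (a + 2) :: real)"
proof -
  have "(6::real) \<le> fact a"
    using fact_mono[OF assms, where 'a = real] by (simp add: eval_nat_numeral)
  then have "(real a + 1) * (real a + 2) * 6 \<le> (real a + 1) * (real a + 2) * fact a"
    by (intro mult_left_mono) simp_all
  moreover have "(fact (a + 2) :: real) = (real a + 1) * (real a + 2) * fact a"
    by (simp add: algebra_simps)
  ultimately show ?thesis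
    by (simp add: mult_ac)
qed

lemma lt_neg_eta_two_rows_Suc:
  assumes "3 \<le> a" "S \<le> 3/8 * fact (a + 2) / (2 * (real a - 1)) + 4"
  shows "S < - eta [a + 1, 3] (a + 4)"
proof -
  define F :: real where "F = fact (a + 2)"
  have "6 * ((real a + 1) * (real a + 2)) \<le> F" "real a * real a \<ge> 3 * real a"
    using fact_add_2_ge[OF assms(1)] assms(1) by (simp_all add: F_def mult_right_mono)
  then have "3/16 * F + 4 * (real a - 1) < F / 3 - 3"
    by (simp add: algebra_simps)
  then have "(3/16 * F + 4 * (real a - 1)) / (real a - 1) < (F / 3 - 3) / (real a - 1)"
    using assms(1) by (intro divide_strict_right_mono) simp_all
  moreover have "(3/16 * F + 4 * (real a - 1)) / (real a - 1) = 3/16 * F / (real a - 1) + 4"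
    using assms(1) by (simp add: field_simps)
  ultimately have "3/16 * F / (real a - 1) + 4 < (F / 3 - 3) / (real a - 1)"
    by simp
  also have "\<dots> \<le> - eta [a + 1, 3] (a + 4)"
    using neg_eta_two_rows_ge[of "a + 1"] assms(1) by (simp add: F_def eval_nat_numeral)
  finally show ?thesis
    using assms(2) by (simp add: F_def field_simps)
qed

lemma lt_neg_eta_two_rows_Suc_Suc:
  assumes "3 \<le> a" "S \<le> 3/8 * fact (a + 2) / real a + 10"
  shows "S < - eta [a + 2, 3] (a + 5)"
proof -
  define F :: real where "F = fact (a + 2)"
  have "6 * (real a * real a) + 18 * real a + 12 \<le> F"
    using fact_add_2_ge[OF assms(1)] by (simp add: F_def algebra_simps)
  moreover have "real a * real a \<ge> 3 * real a"
    using assms(1) by (simp add: mult_right_mono)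
  moreover have "6 * F \<le> (real a + 3) * F"
    using assms(1) by (intro mult_right_mono) (simp_all add: F_def)
  ultimately have "3/8 * F + 10 * real a < (real a + 3) * F / 3 - 3"
    by linarith
  then have "(3/8 * F + 10 * real a) / real a < ((real a + 3) * F / 3 - 3) / real a"
    using assms(1) by (intro divide_strict_right_mono) simp_all
  moreover have "(3/8 * F + 10 * real a) / real a = 3/8 * F / real a + 10"
    using assms(1) by (simp add: field_simps)
  moreover have "((real a + 3) * F / 3 - 3) / real a \<le> - eta [a + 2, 3] (a + 5)"
    using neg_eta_two_rows_ge[of "a + 2"] assms(1) by (simp add: F_def eval_nat_numeral algebra_simps)
  ultimately show ?thesis
    using assms(2) by (simp add: F_def)
qed

lemma lt_neg_eta_two_rows:
  assumes "6 \<le> m" "S \<le> 2 * fact (m - 1)"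
  shows "S < - eta [m, 3] (m + 3)"
proof -
  define G :: real where "G = fact (m - 1)"
  define P where "P = real m * real m - 5 * real m + 12"
  have "real m * real m \<ge> 6 * real m" "real m \<ge> 6"
    using assms(1) by (simp_all add: mult_right_mono)
  then have "6 \<le> P"
    unfolding P_def by linarith
  moreover have "2 \<le> G"
    using fact_mono[of 2 "m - 1", where 'a = real] assms(1) by (simp add: G_def eval_nat_numeral)
  ultimately have "G * 6 \<le> G * P"
    by (intro mult_left_mono) simp_all
  moreover have "(fact (m + 1) :: real) = (real m + 1) * real m * G"
    using assms(1) by (simp add: G_def fact_reduce)
  moreover have "(real m + 1) * real m * G / 3 - 3 - 2 * G * (real m - 2) = G * P / 3 - 3"
    by (simp add: P_def algebra_simps)
  ultimately have "2 * G * (real m - 2) < fact (m + 1) / 3 - 3"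
    using \<open>2 \<le> G\<close> by linarith
  then have "2 * G < (fact (m + 1) / 3 - 3) / (real m - 2)"
    using assms(1) by (simp add: pos_less_divide_eq mult_ac del: fact_Suc)
  then show ?thesis
    using neg_eta_two_rows_ge[of m] assms by (simp add: G_def del: fact_Suc)
qed

lemma der_frac_fact_div_le:
  assumes "der_frac k \<le> B" "1 \<le> x" "1 \<le> y" "k + 2 \<le> N"
  shows "der_frac k * fact (k + 2) / (x * y) \<le> B * fact N"
proof -
  have "1 \<le> x * y"
    using assms(2,3) mult_mono[of 1 x 1 y] by simp
  then have "der_frac k * fact (k + 2) / (x * y) \<le> der_frac k * fact (k + 2)"
    using divide_left_mono[of 1 "x * y" "der_frac k * fact (k + 2)"] der_frac_nonneg[of k] by simp
  also have "\<dots> \<le> B * fact N"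
    using assms(1,4) der_frac_nonneg[of k] by (intro mult_mono fact_mono) auto
  finally show ?thesis .
qed

lemma abs_eta_three_rows_le_fact:
  assumes "c < b" "b < a" "3 \<le> b + c"
  shows "\<bar>eta [a, Suc b, Suc (Suc c)] (a + b + c + 3)\<bar> \<le> 2 * fact (a + b + c - 1)"
proof -
  let ?m = "a + b + c"
  have "der_frac a * fact (a + 2) / ((real a - real b) * (real a - real c)) \<le> 1/2 * fact (?m - 1)"
    using assms by (intro der_frac_fact_div_le der_frac_le_half) auto
  moreover have "der_frac b * fact (b + 2) / ((real a - real b) * (real b - real c)) \<le> 1/2 * fact (?m - 1)"
    using assms by (intro der_frac_fact_div_le der_frac_le_half) auto
  moreover have "der_frac c * fact (c + 2) / ((real a - real c) * (real b - real c)) \<le> 1 * fact (?m - 1)"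
    using assms by (intro der_frac_fact_div_le der_frac_le_one) auto
  ultimately show ?thesis
    using abs_eta_three_rows_le[OF assms(1,2)] by linarith
qed

lemma abs_eta_hook_le_fact:
  assumes "4 \<le> b" "b < a"
  shows "\<bar>eta [a, Suc b, 1] (a + b + 2)\<bar> \<le> 2 * fact (a + b - 1 - 1)"
proof -
  have "der_frac a * fact (a + 2) / ((real a - real b) * (real a + 1)) \<le> 1/2 * fact (a + b - 1 - 1)"
    using assms by (intro der_frac_fact_div_le der_frac_le_half) auto
  moreover have "der_frac b * fact (b + 2) / ((real a - real b) * (real b + 1)) \<le> 1/2 * fact (a + b - 1 - 1)"
    using assms by (intro der_frac_fact_div_le der_frac_le_half) auto
  ultimately show ?thesis
    using abs_eta_hook_le[OF assms(2)] by linarith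
qed

lemma abs_eta_three_rows_lt:
  assumes "c < b" "b < a"
  shows "\<bar>eta [a, Suc b, Suc (Suc c)] (a + b + c + 3)\<bar> < - eta [a + b + c, 3] (a + b + c + 3)"
proof -
  let ?S = "\<bar>eta [a, Suc b, Suc (Suc c)] (a + b + c + 3)\<bar>"
  have U: "?S \<le> der_frac a * fact (a + 2) / ((real a - real b) * (real a - real c))
     + der_frac b * fact (b + 2) / ((real a - real b) * (real b - real c))
     + der_frac c * fact (c + 2) / ((real a - real c) * (real b - real c))"
    using abs_eta_three_rows_le[OF assms] .
  consider "a = 2" "b = 1" "c = 0" | "3 \<le> a" "b = 1" "c = 0" | "b = 2" "c = 0" | "3 \<le> b + c"
    using assms by linarith
  then show ?thesis
  proof cases
    case 1
    have "?S \<le> 7"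
      using U 1 by (simp add: der_frac_values fact_numeral)
    moreover have "- eta [3, 3] (3 + 3) = 11"
      by (subst neg_eta_two_rows_eq) (simp_all add: der_frac_values alt_inv_fact_def fact_numeral)
    ultimately show ?thesis
      using 1 by (simp add: eval_nat_numeral)
  next
    case 2
    have "(real a - 1) * 2 \<le> (real a - 1) * real a"
      using 2 by (intro mult_left_mono) simp_all
    then have "der_frac a * fact (a + 2) / ((real a - 1) * real a) \<le> 3/8 * fact (a + 2) / (2 * (real a - 1))"
      using der_frac_bounds[of a] 2 by (intro frac_le mult_right_mono) (simp_all add: mult.commute)
    moreover have "2 / real a \<le> 4"
      using 2 by (simp add: divide_le_eq)
    ultimately have "?S \<le> 3/8 * fact (a + 2) / (2 * (real a - 1)) + 4"
      using U 2 by (simp add: der_frac_values)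
    then show ?thesis
      using lt_neg_eta_two_rows_Suc[of a ?S] 2 by (simp add: eval_nat_numeral)
  next
    case 3
    then have "3 \<le> a" using assms by simp
    have "der_frac a * fact (a + 2) / ((real a - 2) * real a) \<le> 3/8 * fact (a + 2) / real a"
      using der_frac_bounds[of a] \<open>3 \<le> a\<close> by (intro frac_le mult_right_mono) (simp_all add: mult_right_mono)
    moreover have "6 / (real a - 2) \<le> 6" "1 / real a \<le> 1"
      using \<open>3 \<le> a\<close> by (simp_all add: divide_le_eq)
    moreover have "der_frac 2 * fact (2 + 2) / ((real a - 2) * 2) = 6 / (real a - 2)"
      using \<open>3 \<le> a\<close> by (simp add: der_frac_values fact_numeral field_simps)
    ultimately have "?S \<le> 3/8 * fact (a + 2) / real a + 10"
      using U 3 by simp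
    then show ?thesis
      using lt_neg_eta_two_rows_Suc_Suc[of a ?S] 3 \<open>3 \<le> a\<close> by (simp add: eval_nat_numeral)
  next
    case 4
    then show ?thesis
      using lt_neg_eta_two_rows[of "a + b + c" ?S] abs_eta_three_rows_le_fact[OF assms 4] assms by simp
  qed
qed

lemma abs_eta_hook_lt:
  assumes "2 \<le> b" "b < a"
  shows "\<bar>eta [a, Suc b, 1] (a + b + 2)\<bar> < - eta [a + b - 1, 3] (a + b + 2)"
proof -
  let ?S = "\<bar>eta [a, Suc b, 1] (a + b + 2)\<bar>"
  have U: "?S \<le> der_frac a * fact (a + 2) / ((real a - real b) * (real a + 1))
     + der_frac b * fact (b + 2) / ((real a - real b) * (real b + 1))"
    using abs_eta_hook_le[OF assms(2)] .
  have "3 \<le> a" using assms by simp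
  consider "b = 2" | "b = 3" | "4 \<le> b"
    using assms by linarith
  then show ?thesis
  proof cases
    case 1
    have "2 * (real a - 1) \<le> (real a - 2) * (real a + 1)"
      using \<open>3 \<le> a\<close> mult_right_mono[of 3 "real a" "real a"] by (simp add: algebra_simps)
    then have "der_frac a * fact (a + 2) / ((real a - 2) * (real a + 1)) \<le> 3/8 * fact (a + 2) / (2 * (real a - 1))"
      using der_frac_bounds[of a] \<open>3 \<le> a\<close> by (intro frac_le mult_right_mono) simp_all
    moreover have "der_frac 2 * fact (2 + 2) / ((real a - 2) * (2 + 1)) \<le> 4"
      using \<open>3 \<le> a\<close> by (simp add: der_frac_values fact_numeral divide_le_eq)
    ultimately have "?S \<le> 3/8 * fact (a + 2) / (2 * (real a - 1)) + 4"
      using U 1 by simp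
    then show ?thesis
      using lt_neg_eta_two_rows_Suc[of a ?S] 1 \<open>3 \<le> a\<close> by (simp add: eval_nat_numeral)
  next
    case 2
    then have "4 \<le> a" using assms by simp
    have "4 * real a \<le> real a * real a" "4 \<le> real a"
      using \<open>4 \<le> a\<close> by (simp_all add: mult_right_mono)
    moreover have "(real a - 3) * (real a + 1) = real a * real a - 2 * real a - 3"
      by (simp add: algebra_simps)
    ultimately have "real a \<le> (real a - 3) * (real a + 1)"
      by linarith
    then have "der_frac a * fact (a + 2) / ((real a - 3) * (real a + 1)) \<le> 3/8 * fact (a + 2) / real a"
      using der_frac_bounds[of a] \<open>4 \<le> a\<close> by (intro frac_le mult_right_mono) simp_all
    moreover have "der_frac 3 * fact (3 + 2) / ((real a - 3) * (3 + 1)) \<le> 10"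
      using \<open>4 \<le> a\<close> by (simp add: der_frac_values fact_numeral divide_le_eq)
    ultimately have "?S \<le> 3/8 * fact (a + 2) / real a + 10"
      using U 2 by simp
    then show ?thesis
      using lt_neg_eta_two_rows_Suc_Suc[of a ?S] 2 \<open>4 \<le> a\<close> by (simp add: eval_nat_numeral)
  next
    case 3
    then show ?thesis
      using lt_neg_eta_two_rows[of "a + b - 1" ?S] abs_eta_hook_le_fact[OF 3 assms(2)] assms by simp
  qed
qed

theorem lemma3p6:
  shows "(\<forall>n i::nat. n \<ge> 7 \<and> 3 \<le> i \<and> real i \<le> (real n - 1) / 2 \<longrightarrow>
            \<bar>eta [n - i - 1, i, 1] n\<bar> < - eta [n - 3, 3] n)
       \<and> (\<forall>n i j::nat. n \<ge> 6 \<and> 2 \<le> j \<and> j \<le> i \<and> real i \<le> (real n - 2) / 2 \<and> n - i - j \<ge> i \<longrightarrow>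
            \<bar>eta [n - i - j, i, j] n\<bar> < - eta [n - 3, 3] n)"
proof (intro conjI allI impI)
  fix n i :: nat
  assume "n \<ge> 7 \<and> 3 \<le> i \<and> real i \<le> (real n - 1) / 2"
  then have "3 \<le> i" "real (2 * i + 1) \<le> real n"
    by simp_all
  then have "3 \<le> i" "2 * i + 1 \<le> n"
    by (simp_all only: of_nat_le_iff)
  then have "[n - i - 1, i, 1] = [n - i - 1, Suc (i - 1), 1]" "n = (n - i - 1) + (i - 1) + 2"
    "n - 3 = (n - i - 1) + (i - 1) - 1" "2 \<le> i - 1" "i - 1 < n - i - 1"
    by simp_all
  then show "\<bar>eta [n - i - 1, i, 1] n\<bar> < - eta [n - 3, 3] n"
    using abs_eta_hook_lt[of "i - 1" "n - i - 1"] by metis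
next
  fix n i j :: nat
  assume "n \<ge> 6 \<and> 2 \<le> j \<and> j \<le> i \<and> real i \<le> (real n - 2) / 2 \<and> n - i - j \<ge> i"
  then have "2 \<le> j" "j \<le> i" "i + j \<le> n" "i \<le> n - i - j"
    by linarith+
  then have "[n - i - j, i, j] = [n - i - j, Suc (i - 1), Suc (Suc (j - 2))]"
    "n = (n - i - j) + (i - 1) + (j - 2) + 3" "n - 3 = (n - i - j) + (i - 1) + (j - 2)"
    "j - 2 < i - 1" "i - 1 < n - i - j"
    by simp_all
  then show "\<bar>eta [n - i - j, i, j] n\<bar> < - eta [n - 3, 3] n"
    using abs_eta_three_rows_lt[of "j - 2" "i - 1" "n - i - j"] by metis
qed

end
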